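(* Let $X',X''$ be a disjoint cover of an index set $X$, $\Pi:=\Pi X$, $\Pi':=\Pi X'$, $\Pi'':=\Pi X''$, so $\Pi=\Pi'\times\Pi''$. Let $\mu$ assign to every subset $A$ of $\Pi$, of $\Pi'$ or of $\Pi''$ a subset $\mu(A)\subseteq A$, and define: $B\subseteq A$ is big iff $\mu(A)\subseteq B\subseteq A$. For $\Sigma\subseteq\Pi$ write $\Sigma':=\Sigma\upharpoonright X'$, $\Sigma'':=\Sigma\upharpoonright X''$. Consider the conditions (each universally quantified over all sets of the indicated kinds): (S*1) for $\Sigma'\subseteq\Pi'$, $\Sigma''\subseteq\Pi''$, $\Delta\subseteq\Sigma'\times\Sigma''$: $\Delta\subseteq\Sigma'\times\Sigma''$ is big iff there is $\Gamma'\times\Gamma''\subseteq\Delta$ with $\Gamma'\subseteq\Sigma'$ and $\Gamma''\subseteq\Sigma''$ big; (S*2) for $\Gamma\subseteq\Sigma\subseteq\Pi$: if $\Gamma\subseteq\Sigma$ is big then $\Gamma\upharpoonright X'\subseteq\Sigma\upharpoonright X'$ is big; (S*3) for $A\subseteq\Sigma\subseteq\Pi$: if $A\subseteq\Sigma$ is big then there is a big $B\subseteq\Pi'\times\Sigma''$ with $B\upharpoonright X''\subseteq A\upharpoonright X''$; ($\mu$*1) for $\Sigma'\subseteq\Pi'$, $\Sigma''\subseteq\Pi''$: $\mu(\Sigma'\times\Sigma'')=\mu(\Sigma')\times\mu(\Sigma'')$; ($\mu$*2) for $\Sigma\subseteq\Pi$ and $\Gamma$: if $\mu(\Sigma)\subseteq\Gamma$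 then $\mu(\Sigma\upharpoonright X')\subseteq\Gamma\upharpoonright X'$; ($\mu$*3) for $\Sigma\subseteq\Pi$: $\mu(\Pi'\times\Sigma'')\upharpoonright X''\subseteq\mu(\Sigma)\upharpoonright X''$. Then (S*$i$) is equivalent to ($\mu$*$i$) for $i=1,2,3$.
   Context: $\Pi X$ denotes the product of the value sets over the indices in $X$; for a set $\Sigma$ of sequences and $Y\subseteq X$, $\Sigma\upharpoonright Y$ is the set of restrictions of its elements to $Y$. *)

theory Defs
  imports "HOL-Library.FuncSet"
begin

text \<open>Sequences over an index set Y with value sets V are the extensional functions
  in PiE Y V (this is Pi Y).  Restriction of a set of sequences to Y:\<close>
definition restr_set :: "('i \<Rightarrow> 'v) set \<Rightarrow> 'i set \<Rightarrow> ('i \<Rightarrow> 'v) set" where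
  "restr_set S Y = (\<lambda>f. restrict f Y) ` S"

text \<open>Product of a set of X'-sequences and a set of X''-sequences, as a set of
  sequences on X' union X'' (identification Pi = Pi' x Pi'').\<close>
definition seq_prod :: "'i set \<Rightarrow> ('i \<Rightarrow> 'v) set \<Rightarrow> ('i \<Rightarrow> 'v) set \<Rightarrow> ('i \<Rightarrow> 'v) set" where
  "seq_prod X1 S1 S2 = {(\<lambda>x. if x \<in> X1 then f x else g x) | f g. f \<in> S1 \<and> g \<in> S2}"

definition big :: "(('i \<Rightarrow> 'v) set \<Rightarrow> ('i \<Rightarrow> 'v) set) \<Rightarrow> ('i \<Rightarrow> 'v) set \<Rightarrow> ('i \<Rightarrow> 'v) set \<Rightarrow> bool" where
  "big \<mu> B A \<longleftrightarrow> \<mu> A \<subseteq> B \<and> B \<subseteq> A"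

end

theory Submission
  imports Defs
begin

text \<open>All three equivalences hold pointwise, for an arbitrary \<mu> that shrinks the sets involved:
  a set \<Gamma> is big in \<Sigma> iff it lies between \<mu>(\<Sigma>) and \<Sigma>, so a statement about all big subsets
  reduces to one about the smallest one, \<mu>(\<Sigma>).\<close>

lemma big_self: "\<mu> A \<subseteq> A \<Longrightarrow> big \<mu> (\<mu> A) A"
  unfolding big_def by blast

lemma big_cross_iff_mu_cross:
  fixes cross :: "('a \<Rightarrow> 'b) set \<Rightarrow> ('a \<Rightarrow> 'b) set \<Rightarrow> ('a \<Rightarrow> 'b) set"
  assumes cross_mono: "\<And>A B C D. A \<subseteq> C \<Longrightarrow> B \<subseteq> D \<Longrightarrow> cross A B \<subseteq> cross C D"
    and mu1: "\<mu> S1 \<subseteq> S1" and mu2: "\<mu> S2 \<subseteq> S2" and mu: "\<mu> (cross S1 S2) \<subseteq> cross S1 S2"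
  shows "(\<forall>D. D \<subseteq> cross S1 S2 \<longrightarrow>
            (big \<mu> D (cross S1 S2) \<longleftrightarrow> (\<exists>G1 G2. cross G1 G2 \<subseteq> D \<and> big \<mu> G1 S1 \<and> big \<mu> G2 S2)))
    \<longleftrightarrow> \<mu> (cross S1 S2) = cross (\<mu> S1) (\<mu> S2)"
proof
  assume char: "\<forall>D. D \<subseteq> cross S1 S2 \<longrightarrow>
            (big \<mu> D (cross S1 S2) \<longleftrightarrow> (\<exists>G1 G2. cross G1 G2 \<subseteq> D \<and> big \<mu> G1 S1 \<and> big \<mu> G2 S2))"
  have "big \<mu> (cross (\<mu> S1) (\<mu> S2)) (cross S1 S2)"
    by (rule char[rule_format, OF cross_mono[OF mu1 mu2], THEN iffD2])
      (use big_self[of \<mu>, OF mu1] big_self[of \<mu>, OF mu2] in blast)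
  moreover obtain G1 G2 where "cross G1 G2 \<subseteq> \<mu> (cross S1 S2)" "big \<mu> G1 S1" "big \<mu> G2 S2"
    using char[rule_format, OF mu, THEN iffD1, OF big_self[of \<mu>, OF mu]] by blast
  then have "cross (\<mu> S1) (\<mu> S2) \<subseteq> \<mu> (cross S1 S2)"
    using cross_mono[of "\<mu> S1" G1 "\<mu> S2" G2] unfolding big_def by blast
  ultimately show "\<mu> (cross S1 S2) = cross (\<mu> S1) (\<mu> S2)"
    unfolding big_def by blast
next
  assume mu_cross: "\<mu> (cross S1 S2) = cross (\<mu> S1) (\<mu> S2)"
  show "\<forall>D. D \<subseteq> cross S1 S2 \<longrightarrow>
            (big \<mu> D (cross S1 S2) \<longleftrightarrow> (\<exists>G1 G2. cross G1 G2 \<subseteq> D \<and> big \<mu> G1 S1 \<and> big \<mu> G2 S2))"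
  proof (intro allI impI iffI)
    fix D assume "big \<mu> D (cross S1 S2)"
    then have "cross (\<mu> S1) (\<mu> S2) \<subseteq> D"
      using mu_cross unfolding big_def by simp
    then show "\<exists>G1 G2. cross G1 G2 \<subseteq> D \<and> big \<mu> G1 S1 \<and> big \<mu> G2 S2"
      using big_self[of \<mu>, OF mu1] big_self[of \<mu>, OF mu2] by blast
  next
    fix D assume "D \<subseteq> cross S1 S2" and "\<exists>G1 G2. cross G1 G2 \<subseteq> D \<and> big \<mu> G1 S1 \<and> big \<mu> G2 S2"
    then obtain G1 G2 where "cross G1 G2 \<subseteq> D" "\<mu> S1 \<subseteq> G1" "\<mu> S2 \<subseteq> G2"
      unfolding big_def by blast
    then have "\<mu> (cross S1 S2) \<subseteq> D"
      using mu_cross cross_mono[of "\<mu> S1" G1 "\<mu> S2" G2] by simp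
    with \<open>D \<subseteq> cross S1 S2\<close> show "big \<mu> D (cross S1 S2)"
      unfolding big_def by simp
  qed
qed

lemma big_image_iff_mu_image:
  assumes f: "mono f" and mu: "\<mu> S \<subseteq> S"
  shows "(\<forall>G. G \<subseteq> S \<longrightarrow> big \<mu> G S \<longrightarrow> big \<nu> (f G) (f S))
    \<longleftrightarrow> (\<forall>G. \<mu> S \<subseteq> G \<longrightarrow> \<nu> (f S) \<subseteq> f G)"
proof (intro iffI allI impI)
  fix G
  assume H: "\<forall>G. G \<subseteq> S \<longrightarrow> big \<mu> G S \<longrightarrow> big \<nu> (f G) (f S)" and "\<mu> S \<subseteq> G"
  then have "big \<mu> (G \<inter> S) S" using mu unfolding big_def by blast
  then have "\<nu> (f S) \<subseteq> f (G \<inter> S)" using H unfolding big_def by blast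
  also have "\<dots> \<subseteq> f G" using monoD[OF f] by blast
  finally show "\<nu> (f S) \<subseteq> f G" .
next
  fix G
  assume H: "\<forall>G. \<mu> S \<subseteq> G \<longrightarrow> \<nu> (f S) \<subseteq> f G" and "G \<subseteq> S" and "big \<mu> G S"
  then have "\<nu> (f S) \<subseteq> f G" unfolding big_def by blast
  moreover have "f G \<subseteq> f S" using monoD[OF f \<open>G \<subseteq> S\<close>] .
  ultimately show "big \<nu> (f G) (f S)" unfolding big_def ..
qed

lemma big_image_witness_iff_mu_image:
  assumes f: "mono f" and mu_S: "\<mu> S \<subseteq> S" and mu_T: "\<mu> T \<subseteq> T"
  shows "(\<forall>A. A \<subseteq> S \<longrightarrow> big \<mu> A S \<longrightarrow> (\<exists>B. big \<mu> B T \<and> f B \<subseteq> f A))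
    \<longleftrightarrow> f (\<mu> T) \<subseteq> f (\<mu> S)"
proof
  assume "\<forall>A. A \<subseteq> S \<longrightarrow> big \<mu> A S \<longrightarrow> (\<exists>B. big \<mu> B T \<and> f B \<subseteq> f A)"
  then obtain B where "big \<mu> B T" "f B \<subseteq> f (\<mu> S)"
    using mu_S big_self[of \<mu>, OF mu_S] by blast
  then show "f (\<mu> T) \<subseteq> f (\<mu> S)"
    using monoD[OF f, of "\<mu> T" B] unfolding big_def by blast
next
  assume "f (\<mu> T) \<subseteq> f (\<mu> S)"
  then have "f (\<mu> T) \<subseteq> f A" if "big \<mu> A S" for A
    using monoD[OF f, of "\<mu> S" A] that unfolding big_def by blast
  then show "\<forall>A. A \<subseteq> S \<longrightarrow> big \<mu> A S \<longrightarrow> (\<exists>B. big \<mu> B T \<and> f B \<subseteq> f A)"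
    using big_self[of \<mu>, OF mu_T] by blast
qed

lemma seq_prod_mono:
  "G1 \<subseteq> S1 \<Longrightarrow> G2 \<subseteq> S2 \<Longrightarrow> seq_prod X1 G1 G2 \<subseteq> seq_prod X1 S1 S2"
  unfolding seq_prod_def by blast

lemma seq_prod_subset_PiE:
  assumes "S1 \<subseteq> PiE X1 V" "S2 \<subseteq> PiE X2 V"
  shows "seq_prod X1 S1 S2 \<subseteq> PiE (X1 \<union> X2) V"
proof
  fix h assume "h \<in> seq_prod X1 S1 S2"
  then obtain f g where h: "h = (\<lambda>x. if x \<in> X1 then f x else g x)" "f \<in> S1" "g \<in> S2"
    unfolding seq_prod_def by blast
  then have "f \<in> PiE X1 V" "g \<in> PiE X2 V" using assms by auto
  then show "h \<in> PiE (X1 \<union> X2) V"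
    unfolding h(1) by (auto simp: PiE_def Pi_def extensional_def)
qed

lemma mono_restr_set: "mono (\<lambda>A. restr_set A Y)"
  unfolding restr_set_def by (rule monoI) blast

lemma restr_set_subset_PiE:
  "S \<subseteq> PiE X V \<Longrightarrow> Y \<subseteq> X \<Longrightarrow> restr_set S Y \<subseteq> PiE Y V"
  unfolding restr_set_def by (auto simp: PiE_def Pi_def subset_iff)

theorem fact4p4:
  fixes X X1 X2 :: "'i set" and V :: "'i \<Rightarrow> 'v set"
    and \<mu> :: "('i \<Rightarrow> 'v) set \<Rightarrow> ('i \<Rightarrow> 'v) set"
  assumes cover: "X = X1 \<union> X2" and disj: "X1 \<inter> X2 = {}"
    and mu_sub: "\<And>A. A \<subseteq> PiE X V \<or> A \<subseteq> PiE X1 V \<or> A \<subseteq> PiE X2 V \<Longrightarrow> \<mu> A \<subseteq> A"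
  shows
   "((\<forall>S1 S2 D. S1 \<subseteq> PiE X1 V \<longrightarrow> S2 \<subseteq> PiE X2 V \<longrightarrow> D \<subseteq> seq_prod X1 S1 S2 \<longrightarrow>
        (big \<mu> D (seq_prod X1 S1 S2) \<longleftrightarrow>
          (\<exists>G1 G2. seq_prod X1 G1 G2 \<subseteq> D \<and> big \<mu> G1 S1 \<and> big \<mu> G2 S2)))
     \<longleftrightarrow>
     (\<forall>S1 S2. S1 \<subseteq> PiE X1 V \<longrightarrow> S2 \<subseteq> PiE X2 V \<longrightarrow>
        \<mu> (seq_prod X1 S1 S2) = seq_prod X1 (\<mu> S1) (\<mu> S2)))
  \<and> ((\<forall>S G. S \<subseteq> PiE X V \<longrightarrow> G \<subseteq> S \<longrightarrow>
        big \<mu> G S \<longrightarrow> big \<mu> (restr_set G X1) (restr_set S X1))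
     \<longleftrightarrow>
     (\<forall>S G. S \<subseteq> PiE X V \<longrightarrow> \<mu> S \<subseteq> G \<longrightarrow>
        \<mu> (restr_set S X1) \<subseteq> restr_set G X1))
  \<and> ((\<forall>S A. S \<subseteq> PiE X V \<longrightarrow> A \<subseteq> S \<longrightarrow> big \<mu> A S \<longrightarrow>
        (\<exists>B. big \<mu> B (seq_prod X1 (PiE X1 V) (restr_set S X2)) \<and>
             restr_set B X2 \<subseteq> restr_set A X2))
     \<longleftrightarrow>
     (\<forall>S. S \<subseteq> PiE X V \<longrightarrow>
        restr_set (\<mu> (seq_prod X1 (PiE X1 V) (restr_set S X2))) X2 \<subseteq> restr_set (\<mu> S) X2))"
proof -
  have mu_X: "\<mu> S \<subseteq> S" if "S \<subseteq> PiE X V" for S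
    using mu_sub that by blast
  have mu_X1: "\<mu> S \<subseteq> S" if "S \<subseteq> PiE X1 V" for S
    using mu_sub that by blast
  have mu_X2: "\<mu> S \<subseteq> S" if "S \<subseteq> PiE X2 V" for S
    using mu_sub that by blast
  have mu_prod: "\<mu> (seq_prod X1 S1 S2) \<subseteq> seq_prod X1 S1 S2"
    if "S1 \<subseteq> PiE X1 V" "S2 \<subseteq> PiE X2 V" for S1 S2
    using mu_X seq_prod_subset_PiE[OF that] cover by blast
  have restr_X2: "restr_set S X2 \<subseteq> PiE X2 V" if "S \<subseteq> PiE X V" for S
    using restr_set_subset_PiE[OF that] cover by blast
  have cross: "(\<forall>D. D \<subseteq> seq_prod X1 S1 S2 \<longrightarrow> (big \<mu> D (seq_prod X1 S1 S2) \<longleftrightarrow>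
        (\<exists>G1 G2. seq_prod X1 G1 G2 \<subseteq> D \<and> big \<mu> G1 S1 \<and> big \<mu> G2 S2)))
      \<longleftrightarrow> \<mu> (seq_prod X1 S1 S2) = seq_prod X1 (\<mu> S1) (\<mu> S2)"
    if "S1 \<subseteq> PiE X1 V" "S2 \<subseteq> PiE X2 V" for S1 S2
    by (rule big_cross_iff_mu_cross) (erule (1) seq_prod_mono | rule mu_X1 mu_X2 mu_prod that)+
  show ?thesis
    apply (intro conjI; rule iff_allI)
      subgoal for S1
        by (rule iff_allI) (use cross in meson)
     subgoal for S
      using big_image_iff_mu_image[OF mono_restr_set, where S=S and \<nu>=\<mu>] mu_X[of S] by meson
    subgoal for S
      using big_image_witness_iff_mu_image[OF mono_restr_set, where S=S]
        mu_X[of S] mu_prod[OF subset_refl restr_X2[of S]] by meson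
    done
qed

end
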